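(* There is a universal constant $c>0$ such that the following holds. Let $\varepsilon\ge 0,\delta\ge 0$ with $\varepsilon+\delta<c$. Let $A$ be any $(\varepsilon,\delta)$-differentially private mechanism (with respect to user-level adjacency) whose output depends on the users' data only through the vector of summed counts $N=[N_1,\dots,N_k]$. Then \[ S^A_{m,\alpha,\varepsilon,\delta}=\Omega\left(\frac{k}{m\alpha^2}+\frac{k}{\alpha(\varepsilon+\delta)}\right). \]
   Context: Let $[k]=\{1,\dots,k\}$ and let $\Delta_k$ be the set of probability distributions on $[k]$. There are $s$ users; each user $u$ holds $m$ samples $X_1(u),\dots,X_m(u)$, and all $sm$ samples are i.i.d. from an unknown $p\in\Delta_k$. For a user $u$, $N_i(u)$ is the number of samples of user $u$ equal to $i$, and $N_i=\sum_u N_i(u)$. An algorithm $A$ maps the users' data to an estimate $\hat p^A\in\Delta_k$, possibly randomized. Two datasets are adjacent if they differ only in the data of a single user. $A$ is $(\varepsilon,\delta)$-differentially private if for all adjacent datasets $D,D'$ and all measurable sets $S$ of outputs, $\Pr[A(D)\in S]\le e^{\varepsilon}\Pr[A(D')\in S]+\delta$. Let $L(A,s,m,p)=\mathbb{E}\left[\sum_{i=1}^k|p_i-\hat p^A_i|\right]$, the expectation being over the samples and the algorithm's randomness. The user complexity is $S^A_{m,\alpha,\varepsilon,\delta}=\min\{s:\sup_{p\in\Delta_k}L(A,s,m,p)\le\alpha\}$. The constant in $\Omega$ is universal. *)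

theory Defs
  imports "HOL-Probability.Probability"
begin

text \<open>The alphabet [k] is rendered as {..<k} (0-based labels).
  A dataset of s users with m samples each is D :: nat => nat => nat,
  where D u j is the j-th sample (j < m) of user u (u < s); other entries are irrelevant.\<close>

definition valid_dataset :: "nat \<Rightarrow> nat \<Rightarrow> nat \<Rightarrow> (nat \<Rightarrow> nat \<Rightarrow> nat) \<Rightarrow> bool" where
  "valid_dataset k s m D \<longleftrightarrow> (\<forall>u<s. \<forall>j<m. D u j < k)"

definition counts :: "nat \<Rightarrow> nat \<Rightarrow> (nat \<Rightarrow> nat \<Rightarrow> nat) \<Rightarrow> nat \<Rightarrow> nat" where
  "counts s m D i = card {(u, j). u < s \<and> j < m \<and> D u j = i}"

definition user_adjacent :: "nat \<Rightarrow> nat \<Rightarrow> (nat \<Rightarrow> nat \<Rightarrow> nat) \<Rightarrow> (nat \<Rightarrow> nat \<Rightarrow> nat) \<Rightarrow> bool" where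
  "user_adjacent s m D D' \<longleftrightarrow> (\<exists>u<s. \<forall>v<s. \<forall>j<m. v \<noteq> u \<longrightarrow> D v j = D' v j)"

definition out_space :: "nat \<Rightarrow> (nat \<Rightarrow> real) measure" where
  "out_space k = PiM {..<k} (\<lambda>_. borel)"

definition prob_simplex :: "nat \<Rightarrow> (nat \<Rightarrow> real) set" where
  "prob_simplex k = {x. (\<forall>i<k. 0 \<le> x i) \<and> (\<Sum>i<k. x i) = 1}"

text \<open>A mechanism depending on the data only through the counts: for each number of
  users s and each count vector N, a probability distribution of the estimate,
  supported on the simplex.\<close>
definition valid_count_mechanism ::
  "nat \<Rightarrow> (nat \<Rightarrow> (nat \<Rightarrow> nat) \<Rightarrow> (nat \<Rightarrow> real) measure) \<Rightarrow> bool" where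
  "valid_count_mechanism k M \<longleftrightarrow>
     (\<forall>s N. prob_space (M s N) \<and> sets (M s N) = sets (out_space k)
            \<and> space (M s N) = space (out_space k)
            \<and> (AE x in M s N. x \<in> prob_simplex k))"

definition count_mechanism_dp ::
  "nat \<Rightarrow> nat \<Rightarrow> (nat \<Rightarrow> (nat \<Rightarrow> nat) \<Rightarrow> (nat \<Rightarrow> real) measure) \<Rightarrow> real \<Rightarrow> real \<Rightarrow> bool" where
  "count_mechanism_dp k m M \<epsilon> \<delta> \<longleftrightarrow>
     (\<forall>s D D'. valid_dataset k s m D \<and> valid_dataset k s m D' \<and> user_adjacent s m D D' \<longrightarrow>
        (\<forall>S\<in>sets (out_space k). measure (M s (counts s m D)) S
                          \<le> exp \<epsilon> * measure (M s (counts s m D')) S + \<delta>))"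

definition sample_data :: "nat \<Rightarrow> nat \<Rightarrow> nat pmf \<Rightarrow> (nat \<Rightarrow> nat \<Rightarrow> nat) pmf" where
  "sample_data s m p = Pi_pmf {..<s} (\<lambda>_. 0) (\<lambda>_. Pi_pmf {..<m} 0 (\<lambda>_. p))"

definition loss ::
  "nat \<Rightarrow> (nat \<Rightarrow> (nat \<Rightarrow> nat) \<Rightarrow> (nat \<Rightarrow> real) measure) \<Rightarrow> nat \<Rightarrow> nat \<Rightarrow> nat pmf \<Rightarrow> real" where
  "loss k M s m p = measure_pmf.expectation (sample_data s m p)
     (\<lambda>D. \<integral>x. (\<Sum>i<k. \<bar>pmf p i - x i\<bar>) \<partial>(M s (counts s m D)))"

end

theory Submission
  imports Defs
begin

text \<open>Assouad's method. Let \<open>h = k div 2\<close>, \<open>\<gamma> = 32 \<alpha>\<close> and, for \<open>S \<subseteq> {..<h}\<close>, let \<open>p\<^sub>S\<close> give each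
  pair of labels \<open>{2i, 2i+1}\<close> mass \<open>1/h\<close>, split as \<open>(1 \<plusminus> \<gamma>)/(2h)\<close> with the heavier label even
  iff \<open>i \<in> S\<close>. The \<open>l\<^sub>1\<close> error of an estimate of \<open>p\<^sub>S\<close> is at least \<open>\<gamma>/h\<close> times the number of pairs
  it ranks the wrong way round. Averaging over the cube, the loss would be at least \<open>\<gamma>/16 > \<alpha>\<close>
  if, whenever \<open>i \<notin> T\<close>, the test \<open>x(2i) \<le> x(2i+1)\<close> on the output had total error at least
  \<open>1/8\<close> on samples from \<open>p\<^sub>T\<close> and from \<open>p\<^sub>T \<^sub>\<union> \<^sub>{\<^sub>i\<^sub>}\<close>. This holds
  \<^item> statistically if \<open>s m \<gamma>\<^sup>2 / h \<le> 1/2\<close>: the two sample distributions then have Bhattacharyya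
    coefficient at least \<open>1/2\<close> (Le Cam);
  \<^item> under privacy if \<open>(s \<gamma> / h + 1)(e\<^sup>\<epsilon> - 1 + \<delta>) \<le> 7/8\<close>: both samples are relabellings of one
    sample, differing in \<open>s m \<gamma> / h\<close> entries on average, and since the mechanism sees only the
    counts these entries can be packed into about \<open>s \<gamma> / h\<close> users, to which group privacy applies.
  So both conditions fail, which gives the two terms of the bound.\<close>

lemma sum_lessThan_double:
  fixes g :: "nat \<Rightarrow> 'a::comm_monoid_add"
  shows "(\<Sum>x<2*h. g x) = (\<Sum>i<h. g (2*i) + g (2*i+1))"
  by (induction h) (simp_all add: lessThan_Suc ac_simps)

lemma sum_Pow_remove:
  fixes f :: "'a set \<Rightarrow> 'b::comm_monoid_add"
  assumes "finite H" "i \<in> H"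
  shows "sum f (Pow H) = (\<Sum>T\<in>Pow (H - {i}). f T + f (insert i T))"
proof -
  have split: "Pow H = Pow (H - {i}) \<union> insert i ` Pow (H - {i})"
    using Pow_insert[of i "H - {i}"] assms(2) by (simp add: insert_absorb)
  have inj: "inj_on (insert i) (Pow (H - {i}))"
    by (rule inj_onI) auto
  have "sum f (Pow H) = sum f (Pow (H - {i})) + sum f (insert i ` Pow (H - {i}))"
    unfolding split by (intro sum.union_disjoint) (use assms(1) in auto)
  also have "sum f (insert i ` Pow (H - {i})) = (\<Sum>T\<in>Pow (H - {i}). f (insert i T))"
    by (simp add: sum.reindex[OF inj])
  finally show ?thesis
    by (simp add: sum.distrib)
qed

lemma sum_Pow_ge_of_pairs:
  fixes F :: "'a \<Rightarrow> 'a set \<Rightarrow> real"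
  assumes H: "finite H"
    and pair: "\<And>i T. i \<in> H \<Longrightarrow> T \<subseteq> H - {i} \<Longrightarrow> \<beta> \<le> F i T + F i (insert i T)"
  shows "real (card H) * 2 ^ (card H - 1) * \<beta> \<le> (\<Sum>T\<in>Pow H. \<Sum>i\<in>H. F i T)"
proof -
  have "2 ^ (card H - 1) * \<beta> \<le> (\<Sum>T\<in>Pow H. F i T)" if i: "i \<in> H" for i
  proof -
    have "2 ^ (card H - 1) * \<beta> = (\<Sum>T\<in>Pow (H - {i}). \<beta>)"
      using H i by (simp add: card_Pow)
    also have "\<dots> \<le> (\<Sum>T\<in>Pow (H - {i}). F i T + F i (insert i T))"
      using pair i by (intro sum_mono) auto
    also have "\<dots> = (\<Sum>T\<in>Pow H. F i T)"
      using H i by (rule sum_Pow_remove[symmetric])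
    finally show ?thesis .
  qed
  then have "(\<Sum>i\<in>H. 2 ^ (card H - 1) * \<beta>) \<le> (\<Sum>i\<in>H. \<Sum>T\<in>Pow H. F i T)"
    by (rule sum_mono)
  then show ?thesis
    by (simp add: sum.swap[of _ H])
qed

lemma pmf_embed_pmf_finite:
  fixes f :: "'a \<Rightarrow> real"
  assumes "finite A" "\<And>x. 0 \<le> f x" "\<And>x. x \<notin> A \<Longrightarrow> f x = 0" "sum f A = 1"
  shows "pmf (embed_pmf f) x = f x"
proof (rule pmf_embed_pmf)
  have "(\<integral>\<^sup>+x. ennreal (f x) \<partial>count_space UNIV) = (\<Sum>x\<in>A. ennreal (f x))"
    using assms(1,3) by (intro nn_integral_count_space') auto
  then show "(\<integral>\<^sup>+x. ennreal (f x) \<partial>count_space UNIV) = 1"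
    using assms(2,4) by (simp add: sum_ennreal)
qed (rule assms(2))

lemma ex_bij_betw_vimage_subset:
  assumes "finite P" "A \<subseteq> P" "B \<subseteq> P" "card A \<le> card B"
  shows "\<exists>\<sigma>. bij_betw \<sigma> P P \<and> (\<forall>p\<in>P. \<sigma> p \<in> A \<longrightarrow> p \<in> B)"
proof -
  have fin: "finite A" "finite B" using assms finite_subset by auto
  obtain B' where B': "B' \<subseteq> B" "card B' = card A"
    using obtain_subset_with_card_n[OF assms(4)] by metis
  have finB': "finite B'" using B'(1) fin(2) finite_subset by auto
  obtain \<sigma>1 where \<sigma>1: "bij_betw \<sigma>1 B' A"
    using finite_same_card_bij[OF finB' fin(1) B'(2)] by blast
  have "card (P - B') = card (P - A)"
    using B' assms finB' fin(1) by (simp add: card_Diff_subset)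
  then obtain \<sigma>2 where \<sigma>2: "bij_betw \<sigma>2 (P - B') (P - A)"
    using finite_same_card_bij[of "P - B'" "P - A"] assms(1) by auto
  define \<sigma> where "\<sigma> p = (if p \<in> B' then \<sigma>1 p else \<sigma>2 p)" for p
  have "bij_betw \<sigma> (B' \<union> (P - B')) (A \<union> (P - A))"
  proof (rule bij_betw_combine)
    show "bij_betw \<sigma> B' A"
      using \<sigma>1 by (rule bij_betw_cong[THEN iffD1, rotated]) (simp add: \<sigma>_def)
    show "bij_betw \<sigma> (P - B') (P - A)"
      using \<sigma>2 by (rule bij_betw_cong[THEN iffD1, rotated]) (simp add: \<sigma>_def)
  qed auto
  moreover have "B' \<union> (P - B') = P" "A \<union> (P - A) = P" using B'(1) assms(2,3) by auto
  ultimately have "bij_betw \<sigma> P P" by simp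
  moreover have "\<forall>p\<in>P. \<sigma> p \<in> A \<longrightarrow> p \<in> B"
  proof (intro ballI impI, rule ccontr)
    fix p assume p: "p \<in> P" "\<sigma> p \<in> A" "p \<notin> B"
    then have "\<sigma> p = \<sigma>2 p" "p \<in> P - B'"
      using B'(1) by (auto simp: \<sigma>_def)
    then have "\<sigma> p \<in> P - A"
      using \<sigma>2 by (auto simp: bij_betw_def)
    then show False
      using p(2) by simp
  qed
  ultimately show ?thesis
    by (intro exI[of _ \<sigma>] conjI)
qed

lemma card_bij_betw_filter:
  assumes \<sigma>: "bij_betw \<sigma> P P"
  shows "card {p \<in> P. Q (\<sigma> p)} = card {q \<in> P. Q q}"
proof (rule bij_betw_same_card, rule bij_betw_subset[OF \<sigma>])
  show "\<sigma> ` {p \<in> P. Q (\<sigma> p)} = {q \<in> P. Q q}"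
  proof
    show "\<sigma> ` {p \<in> P. Q (\<sigma> p)} \<subseteq> {q \<in> P. Q q}"
      using \<sigma> unfolding bij_betw_def by blast
    show "{q \<in> P. Q q} \<subseteq> \<sigma> ` {p \<in> P. Q (\<sigma> p)}"
    proof
      fix q assume q: "q \<in> {q \<in> P. Q q}"
      then have "q \<in> \<sigma> ` P"
        using \<sigma> by (simp add: bij_betw_def)
      then show "q \<in> \<sigma> ` {p \<in> P. Q (\<sigma> p)}"
        using q by blast
    qed
  qed
qed auto

section \<open>Bhattacharyya coefficient and Le Cam's bound\<close>

definition bhattacharyya :: "'a set \<Rightarrow> 'a pmf \<Rightarrow> 'a pmf \<Rightarrow> real" where
  "bhattacharyya X P Q = (\<Sum>x\<in>X. sqrt (pmf P x * pmf Q x))"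

lemma real_sqrt_prod: "finite A \<Longrightarrow> sqrt (\<Prod>a\<in>A. f a) = (\<Prod>a\<in>A. sqrt (f a))"
  by (induction A rule: finite_induct) (simp_all add: real_sqrt_mult)

lemma bhattacharyya_Pi_pmf:
  assumes A: "finite A" and X: "finite X"
  shows "bhattacharyya (PiE_dflt A d (\<lambda>_. X)) (Pi_pmf A d P) (Pi_pmf A d Q)
           = (\<Prod>a\<in>A. bhattacharyya X (P a) (Q a))"
proof -
  define extend where "extend g x = (if x \<in> A then g x else d)" for g :: "'a \<Rightarrow> 'b" and x
  have img: "extend ` PiE A (\<lambda>_. X) = PiE_dflt A d (\<lambda>_. X)"
    unfolding extend_def by (rule dflt_image_PiE)
  have inj: "inj_on extend (PiE A (\<lambda>_. X))"
  proof (rule inj_onI, rule ext)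
    fix g1 g2 x
    assume g: "g1 \<in> PiE A (\<lambda>_. X)" "g2 \<in> PiE A (\<lambda>_. X)" and eq: "extend g1 = extend g2"
    show "g1 x = g2 x"
    proof (cases "x \<in> A")
      case True
      then show ?thesis using fun_cong[OF eq, of x] by (simp add: extend_def)
    next
      case False
      then show ?thesis using PiE_arb[OF g(1) False] PiE_arb[OF g(2) False] by simp
    qed
  qed
  have pmf_ext: "pmf (Pi_pmf A d R) (extend g) = (\<Prod>a\<in>A. pmf (R a) (g a))" for R g
    using A by (simp add: pmf_Pi extend_def)
  have sqrt_pmf_ext: "sqrt (pmf (Pi_pmf A d P) (extend g) * pmf (Pi_pmf A d Q) (extend g))
      = (\<Prod>a\<in>A. sqrt (pmf (P a) (g a) * pmf (Q a) (g a)))" for g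
    unfolding pmf_ext prod.distrib[symmetric] by (rule real_sqrt_prod[OF A])
  have "bhattacharyya (PiE_dflt A d (\<lambda>_. X)) (Pi_pmf A d P) (Pi_pmf A d Q)
      = (\<Sum>g\<in>PiE A (\<lambda>_. X). \<Prod>a\<in>A. sqrt (pmf (P a) (g a) * pmf (Q a) (g a)))"
    unfolding bhattacharyya_def img[symmetric] sum.reindex[OF inj] comp_def sqrt_pmf_ext ..
  also have "\<dots> = (\<Prod>a\<in>A. bhattacharyya X (P a) (Q a))"
    unfolding bhattacharyya_def by (rule prod_sum_PiE[symmetric]) (use A X in auto)
  finally show ?thesis .
qed

text \<open>Le Cam's two-point bound: by Cauchy-Schwarz, the squared Bhattacharyya coefficient is at
  most \<open>\<Sum> min (P x) (Q x) \<cdot> \<Sum> max (P x) (Q x) \<le> 2 \<Sum> min (P x) (Q x)\<close>.\<close>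
lemma test_error_ge_bhattacharyya:
  fixes P Q :: "'a pmf" and \<phi> :: "'a \<Rightarrow> real"
  assumes X: "finite X" "set_pmf P \<subseteq> X" "set_pmf Q \<subseteq> X"
    and \<phi>: "\<And>x. 0 \<le> \<phi> x" "\<And>x. \<phi> x \<le> 1"
  shows "bhattacharyya X P Q ^ 2 / 2
           \<le> measure_pmf.expectation P \<phi> + measure_pmf.expectation Q (\<lambda>x. 1 - \<phi> x)"
proof -
  define lo where "lo x = min (pmf P x) (pmf Q x)" for x
  define hi where "hi x = max (pmf P x) (pmf Q x)" for x
  have "sqrt (pmf P x * pmf Q x) = sqrt (lo x) * sqrt (hi x)" for x
    unfolding real_sqrt_mult[symmetric] lo_def hi_def
    by (cases "pmf P x \<le> pmf Q x") (simp_all add: min_def max_def mult.commute)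
  then have "bhattacharyya X P Q = (\<Sum>x\<in>X. sqrt (lo x) * sqrt (hi x))"
    by (simp add: bhattacharyya_def)
  then have "bhattacharyya X P Q ^ 2 \<le> (\<Sum>x\<in>X. sqrt (lo x) ^ 2) * (\<Sum>x\<in>X. sqrt (hi x) ^ 2)"
    by (simp only: Cauchy_Schwarz_ineq_sum)
  also have "\<dots> = (\<Sum>x\<in>X. lo x) * (\<Sum>x\<in>X. hi x)"
    by (simp add: lo_def hi_def le_max_iff_disj)
  also have "\<dots> \<le> (\<Sum>x\<in>X. lo x) * 2"
  proof (rule mult_left_mono)
    have "(\<Sum>x\<in>X. hi x) \<le> (\<Sum>x\<in>X. pmf P x + pmf Q x)"
      by (rule sum_mono) (simp add: hi_def)
    also have "\<dots> = 2"
      using X by (simp add: sum.distrib sum_pmf_eq_1)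
    finally show "(\<Sum>x\<in>X. hi x) \<le> 2" .
  qed (simp add: lo_def sum_nonneg)
  finally have "bhattacharyya X P Q ^ 2 / 2 \<le> (\<Sum>x\<in>X. lo x)"
    by simp
  also have "\<dots> \<le> (\<Sum>x\<in>X. \<phi> x * pmf P x + (1 - \<phi> x) * pmf Q x)"
  proof (rule sum_mono)
    fix x
    have "lo x * \<phi> x + lo x * (1 - \<phi> x) \<le> pmf P x * \<phi> x + pmf Q x * (1 - \<phi> x)"
      using \<phi>[of x] by (intro add_mono mult_right_mono) (auto simp: lo_def)
    then show "lo x \<le> \<phi> x * pmf P x + (1 - \<phi> x) * pmf Q x"
      by (simp add: algebra_simps)
  qed
  also have "\<dots> = measure_pmf.expectation P \<phi> + measure_pmf.expectation Q (\<lambda>x. 1 - \<phi> x)"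
    using X by (simp add: sum.distrib integral_measure_pmf_real[where A = X] subset_iff)
  finally show ?thesis .
qed

section \<open>Group privacy for mechanisms that see only the counts\<close>

lemma counts_cong:
  assumes "\<And>u j. u < s \<Longrightarrow> j < m \<Longrightarrow> D u j = D' u j"
  shows "counts s m D = counts s m D'"
  unfolding counts_def using assms by (intro ext arg_cong[where f = card]) auto

lemma counts_eq_card_positions:
  "counts s m D i = card {p \<in> {..<s} \<times> {..<m}. case_prod D p = i}"
  unfolding counts_def by (intro arg_cong[where f = card]) auto

lemma counts_permute:
  assumes \<sigma>: "bij_betw \<sigma> ({..<s} \<times> {..<m}) ({..<s} \<times> {..<m})"
  shows "counts s m (\<lambda>u j. D (fst (\<sigma> (u, j))) (snd (\<sigma> (u, j)))) = counts s m D"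
proof
  fix i
  let ?P = "{..<s} \<times> {..<m}"
  have "card {p \<in> ?P. case_prod D (\<sigma> p) = i} = card {q \<in> ?P. case_prod D q = i}"
    using \<sigma> by (rule card_bij_betw_filter)
  then show "counts s m (\<lambda>u j. D (fst (\<sigma> (u, j))) (snd (\<sigma> (u, j)))) i = counts s m D i"
    by (simp add: counts_eq_card_positions case_prod_beta)
qed

lemma prob_space_count_mechanism: "valid_count_mechanism k M \<Longrightarrow> prob_space (M s N)"
  by (simp add: valid_count_mechanism_def)

lemma measure_adjacent_le:
  assumes vm: "valid_count_mechanism k M" and dp: "count_mechanism_dp k m M \<epsilon> \<delta>"
    and "0 \<le> \<epsilon>" "B \<in> sets (out_space k)"
    and "valid_dataset k s m D" "valid_dataset k s m D'" "user_adjacent s m D D'"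
  shows "measure (M s (counts s m D)) B \<le> measure (M s (counts s m D')) B + (exp \<epsilon> - 1 + \<delta>)"
proof -
  let ?\<mu> = "measure (M s (counts s m D')) B"
  interpret prob_space "M s (counts s m D')"
    using vm by (rule prob_space_count_mechanism)
  have "measure (M s (counts s m D)) B \<le> exp \<epsilon> * ?\<mu> + \<delta>"
    using dp assms(4-7) by (auto simp: count_mechanism_dp_def)
  moreover have "(exp \<epsilon> - 1) * ?\<mu> \<le> exp \<epsilon> - 1"
    using \<open>0 \<le> \<epsilon>\<close> by (intro mult_right_le_one_le) auto
  ultimately show ?thesis
    by (simp add: algebra_simps)
qed

lemma count_mechanism_group_privacy:
  fixes r :: nat
  assumes vm: "valid_count_mechanism k M" and dp: "count_mechanism_dp k m M \<epsilon> \<delta>"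
    and \<epsilon>: "0 \<le> \<epsilon>" and \<delta>: "0 \<le> \<delta>" and B: "B \<in> sets (out_space k)"
    and D: "valid_dataset k s m D" and D': "valid_dataset k s m D'"
    and agree: "\<And>u j. u < s \<Longrightarrow> r \<le> u \<Longrightarrow> j < m \<Longrightarrow> D u j = D' u j"
  shows "measure (M s (counts s m D')) B \<le> measure (M s (counts s m D)) B + real r * (exp \<epsilon> - 1 + \<delta>)"
  using D' agree
proof (induction r arbitrary: D')
  case 0
  then show ?case
    using counts_cong[of s m D' D] by simp
next
  case (Suc r)
  define H where "H u j = (if u = r then D u j else D' u j)" for u j
  have H: "valid_dataset k s m H"
    using D Suc.prems(1) by (auto simp: valid_dataset_def H_def)
  have IH: "measure (M s (counts s m H)) B \<le> measure (M s (counts s m D)) B + r * (exp \<epsilon> - 1 + \<delta>)"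
    by (rule Suc.IH[OF H]) (use Suc.prems(2) in \<open>auto simp: H_def\<close>)
  have "measure (M s (counts s m D')) B \<le> measure (M s (counts s m H)) B + (exp \<epsilon> - 1 + \<delta>)"
  proof (cases "r < s")
    case True
    then have "user_adjacent s m D' H"
      by (auto simp: user_adjacent_def H_def)
    then show ?thesis
      using measure_adjacent_le[OF vm dp \<epsilon> B Suc.prems(1) H] by simp
  next
    case False
    then have "counts s m D' = counts s m H"
      by (intro counts_cong) (auto simp: H_def)
    then show ?thesis
      using \<epsilon> \<delta> by simp
  qed
  with IH show ?case
    by (simp add: algebra_simps)
qed

lemma ex_permutation_packing:
  assumes m: "0 < m"
  shows "\<exists>\<sigma>. bij_betw \<sigma> ({..<s} \<times> {..<m}) ({..<s} \<times> {..<m}) \<and>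
           (\<forall>u<s. \<forall>j<m. case_prod D (\<sigma> (u, j)) = z \<longrightarrow> u \<le> counts s m D z div m)"
proof -
  define P where "P = {..<s} \<times> {..<m}"
  define r where "r = counts s m D z div m + 1"
  have "counts s m D z \<le> card P"
    unfolding counts_eq_card_positions P_def by (intro card_mono) auto
  moreover have "counts s m D z < r * m"
    using m by (simp add: r_def dividend_less_div_times)
  moreover have "{p \<in> P. fst p < r} = {..<min r s} \<times> {..<m}"
    by (auto simp: P_def)
  ultimately have card_le: "card {p \<in> P. case_prod D p = z} \<le> card {p \<in> P. fst p < r}"
    by (simp add: counts_eq_card_positions P_def card_cartesian_product min_def)
  have "finite P"
    by (simp add: P_def)
  then obtain \<sigma> where \<sigma>: "bij_betw \<sigma> P P"
    and packed: "\<forall>p\<in>P. \<sigma> p \<in> {q \<in> P. case_prod D q = z} \<longrightarrow> p \<in> {q \<in> P. fst q < r}"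
    using ex_bij_betw_vimage_subset[OF _ Collect_restrict Collect_restrict card_le] by blast
  have "u \<le> counts s m D z div m" if "u < s" "j < m" "case_prod D (\<sigma> (u, j)) = z" for u j
  proof -
    have "(u, j) \<in> P"
      using that(1,2) by (simp add: P_def)
    moreover from this have "\<sigma> (u, j) \<in> P"
      by (rule bij_betwE[OF \<sigma>, rule_format])
    ultimately have "(u, j) \<in> {q \<in> P. fst q < r}"
      using packed that(3) by blast
    then show ?thesis
      by (simp add: r_def)
  qed
  then show ?thesis
    using \<sigma> unfolding P_def by (intro exI[of _ \<sigma>]) blast
qed

text \<open>Since the mechanism sees only the counts, the positions holding \<open>z\<close> can first be packed
  into the first \<open>counts s m D z div m + 1\<close> users, so that group privacy is needed only for that
  many users rather than for every user holding a \<open>z\<close>.\<close>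
lemma count_mechanism_relabel:
  assumes vm: "valid_count_mechanism k M" and dp: "count_mechanism_dp k m M \<epsilon> \<delta>"
    and \<epsilon>: "0 \<le> \<epsilon>" and \<delta>: "0 \<le> \<delta>" and B: "B \<in> sets (out_space k)" and m: "0 < m"
    and valid: "valid_dataset k s m (\<lambda>u j. f (D u j))" "valid_dataset k s m (\<lambda>u j. g (D u j))"
    and agree: "\<And>x. x \<noteq> z \<Longrightarrow> f x = g x"
  shows "measure (M s (counts s m (\<lambda>u j. g (D u j)))) B
           \<le> measure (M s (counts s m (\<lambda>u j. f (D u j)))) B
              + (counts s m D z / m + 1) * (exp \<epsilon> - 1 + \<delta>)"
proof -
  define r where "r = counts s m D z div m + 1"
  obtain \<sigma> where \<sigma>: "bij_betw \<sigma> ({..<s} \<times> {..<m}) ({..<s} \<times> {..<m})"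
    and packed: "\<forall>u<s. \<forall>j<m. case_prod D (\<sigma> (u, j)) = z \<longrightarrow> u \<le> counts s m D z div m"
    using ex_permutation_packing[OF m] by blast
  define E where "E u j = D (fst (\<sigma> (u, j))) (snd (\<sigma> (u, j)))" for u j
  have counts_E: "counts s m (\<lambda>u j. h (E u j)) = counts s m (\<lambda>u j. h (D u j))" for h
    using counts_permute[OF \<sigma>, of "\<lambda>u j. h (D u j)"] by (simp add: E_def)
  have valid_E: "valid_dataset k s m (\<lambda>u j. h (E u j))" if "valid_dataset k s m (\<lambda>u j. h (D u j))" for h
    unfolding valid_dataset_def
  proof (intro allI impI)
    fix u j assume "u < s" "j < m"
    then have "\<sigma> (u, j) \<in> {..<s} \<times> {..<m}"
      using bij_betwE[OF \<sigma>] by blast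
    then have "fst (\<sigma> (u, j)) < s" "snd (\<sigma> (u, j)) < m"
      by (auto simp: mem_Times_iff)
    then show "h (E u j) < k"
      using that by (simp add: valid_dataset_def E_def)
  qed
  have "f (E u j) = g (E u j)" if "u < s" "r \<le> u" "j < m" for u j
  proof (rule agree)
    have "case_prod D (\<sigma> (u, j)) = z \<longrightarrow> u \<le> counts s m D z div m"
      using packed that(1,3) by blast
    then show "E u j \<noteq> z"
      using that(2) by (auto simp: E_def r_def case_prod_beta)
  qed
  then have "measure (M s (counts s m (\<lambda>u j. g (E u j)))) B
      \<le> measure (M s (counts s m (\<lambda>u j. f (E u j)))) B + r * (exp \<epsilon> - 1 + \<delta>)"
    by (rule count_mechanism_group_privacy[OF vm dp \<epsilon> \<delta> B valid_E[OF valid(1)] valid_E[OF valid(2)]])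
  moreover have "real r * (exp \<epsilon> - 1 + \<delta>) \<le> (counts s m D z / m + 1) * (exp \<epsilon> - 1 + \<delta>)"
    using of_nat_div_le_of_nat[of "counts s m D z" m] \<epsilon> \<delta> by (intro mult_right_mono) (simp_all add: r_def)
  ultimately show ?thesis
    unfolding counts_E by linarith
qed

lemma sample_data_map_pmf:
  assumes "f 0 = 0"
  shows "sample_data s m (map_pmf f p) = map_pmf (\<lambda>D u j. f (D u j)) (sample_data s m p)"
proof -
  have "Pi_pmf {..<m} 0 (\<lambda>_. map_pmf f p) = map_pmf ((\<circ>) f) (Pi_pmf {..<m} 0 (\<lambda>_. p))"
    by (rule Pi_pmf_map) (simp_all add: assms)
  then have "sample_data s m (map_pmf f p)
      = Pi_pmf {..<s} (\<lambda>_. 0) (\<lambda>_. map_pmf ((\<circ>) f) (Pi_pmf {..<m} 0 (\<lambda>_. p)))"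
    by (simp add: sample_data_def)
  also have "\<dots> = map_pmf ((\<circ>) ((\<circ>) f)) (sample_data s m p)"
    unfolding sample_data_def by (rule Pi_pmf_map) (auto simp: assms comp_def)
  also have "(\<circ>) ((\<circ>) f) = (\<lambda>D u j. f (D u j))"
    by (simp add: fun_eq_iff)
  finally show ?thesis .
qed

lemma set_sample_data_subset:
  assumes "set_pmf p \<subseteq> X"
  shows "set_pmf (sample_data s m p) \<subseteq> PiE_dflt {..<s} (\<lambda>_. 0) (\<lambda>_. PiE_dflt {..<m} 0 (\<lambda>_. X))"
  using assms by (auto simp: sample_data_def set_Pi_pmf PiE_dflt_def)

lemma sample_data_in_set_pmf:
  "D \<in> set_pmf (sample_data s m p) \<Longrightarrow> u < s \<Longrightarrow> j < m \<Longrightarrow> D u j \<in> set_pmf p"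
  using set_sample_data_subset[of p "set_pmf p" s m] by (auto simp: PiE_dflt_def)

lemma finite_set_sample_data:
  "finite (set_pmf p) \<Longrightarrow> finite (set_pmf (sample_data s m p))"
  by (rule finite_subset[OF set_sample_data_subset[OF order_refl]]) auto

lemma map_pmf_sample_data_entry:
  assumes "u < s" "j < m"
  shows "map_pmf (\<lambda>D. D u j) (sample_data s m p) = p"
proof -
  have "map_pmf (\<lambda>D. D u j) (sample_data s m p)
      = map_pmf (\<lambda>x. x j) (map_pmf (\<lambda>D. D u) (sample_data s m p))"
    by (simp add: pmf.map_comp comp_def)
  then show ?thesis
    using assms by (simp add: sample_data_def Pi_pmf_component)
qed

lemma expectation_counts_sample_data:
  assumes "finite (set_pmf p)"
  shows "measure_pmf.expectation (sample_data s m p) (\<lambda>D. real (counts s m D z))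
           = real s * real m * pmf p z"
proof -
  let ?P = "{..<s} \<times> {..<m}"
  have entry: "measure_pmf.expectation (sample_data s m p) (\<lambda>D. indicator {z} (D u j)) = pmf p z"
    if "u < s" "j < m" for u j
  proof -
    have "measure_pmf.expectation (sample_data s m p) (\<lambda>D. indicator {z} (D u j) :: real)
        = measure_pmf.expectation (map_pmf (\<lambda>D. D u j) (sample_data s m p)) (indicator {z})"
      by (rule integral_map_pmf[symmetric])
    also have "\<dots> = measure_pmf.expectation p (indicator {z})"
      using map_pmf_sample_data_entry[OF that, of p] by (simp only:)
    also have "\<dots> = pmf p z"
      by (simp add: measure_pmf.emeasure_eq_measure measure_pmf_single)
    finally show ?thesis .
  qed
  have "real (counts s m D z) = (\<Sum>q\<in>?P. indicator {z} (case_prod D q))" for D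
    by (simp add: counts_eq_card_positions indicator_def Int_def)
  then have "measure_pmf.expectation (sample_data s m p) (\<lambda>D. real (counts s m D z))
      = (\<Sum>q\<in>?P. measure_pmf.expectation (sample_data s m p) (\<lambda>D. indicator {z} (case_prod D q)))"
    using assms by (simp add: integrable_measure_pmf_finite finite_set_sample_data)
  also have "\<dots> = (\<Sum>q\<in>?P. pmf p z)"
    by (intro sum.cong refl) (auto simp: entry)
  finally show ?thesis
    by (simp add: card_cartesian_product)
qed

section \<open>The hard distributions\<close>

definition cube_weight :: "nat \<Rightarrow> real \<Rightarrow> nat set \<Rightarrow> nat \<Rightarrow> real" where
  "cube_weight h \<gamma> S x =
     (if x < 2*h then (if (x div 2 \<in> S) = even x then 1 + \<gamma> else 1 - \<gamma>) / (2*h) else 0)"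

definition cube_pmf :: "nat \<Rightarrow> real \<Rightarrow> nat set \<Rightarrow> nat pmf" where
  "cube_pmf h \<gamma> S = embed_pmf (cube_weight h \<gamma> S)"

lemma cube_weight_pair:
  assumes "i < h"
  shows "cube_weight h \<gamma> S (2*i) = (if i \<in> S then 1 + \<gamma> else 1 - \<gamma>) / (2*h)"
    and "cube_weight h \<gamma> S (Suc (2*i)) = (if i \<in> S then 1 - \<gamma> else 1 + \<gamma>) / (2*h)"
  using assms by (simp_all add: cube_weight_def)

lemma cube_weight_pair_sum:
  "i < h \<Longrightarrow> cube_weight h \<gamma> S (2*i) + cube_weight h \<gamma> S (Suc (2*i)) = 1 / h"
  by (simp add: cube_weight_pair add_divide_distrib[symmetric])

lemma cube_weight_nonneg: "0 \<le> \<gamma> \<Longrightarrow> \<gamma> \<le> 1 \<Longrightarrow> 0 \<le> cube_weight h \<gamma> S x"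
  by (simp add: cube_weight_def)

lemma sum_cube_weight: "1 \<le> h \<Longrightarrow> (\<Sum>x<2*h. cube_weight h \<gamma> S x) = 1"
  by (simp add: sum_lessThan_double cube_weight_pair_sum)

lemma pmf_cube_pmf:
  "1 \<le> h \<Longrightarrow> 0 \<le> \<gamma> \<Longrightarrow> \<gamma> \<le> 1 \<Longrightarrow> pmf (cube_pmf h \<gamma> S) x = cube_weight h \<gamma> S x"
  unfolding cube_pmf_def
proof (rule pmf_embed_pmf_finite[of "{..<2*h}"])
  show "cube_weight h \<gamma> S x = 0" if "x \<notin> {..<2*h}" for x
    using that by (simp add: cube_weight_def)
qed (simp_all add: cube_weight_nonneg sum_cube_weight)

lemma set_cube_pmf:
  "1 \<le> h \<Longrightarrow> 0 \<le> \<gamma> \<Longrightarrow> \<gamma> \<le> 1 \<Longrightarrow> set_pmf (cube_pmf h \<gamma> S) \<subseteq> {..<2*h}"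
  by (auto simp: set_pmf_eq pmf_cube_pmf cube_weight_def)

text \<open>The common part of \<open>cube_pmf h \<gamma> (insert i T)\<close> and \<open>cube_pmf h \<gamma> T\<close>, with the remaining
  mass \<open>\<gamma>/h\<close> placed on a fresh label \<open>k \<ge> 2*h\<close>; relabelling \<open>k\<close> as \<open>2*i\<close> or as \<open>2*i+1\<close>
  recovers the two distributions.\<close>
definition mix_weight :: "nat \<Rightarrow> nat \<Rightarrow> real \<Rightarrow> nat set \<Rightarrow> nat \<Rightarrow> nat \<Rightarrow> real" where
  "mix_weight k h \<gamma> T i x =
     (if x = k then \<gamma> / h else if x div 2 = i then (1 - \<gamma>) / (2*h) else cube_weight h \<gamma> T x)"

definition mix_pmf :: "nat \<Rightarrow> nat \<Rightarrow> real \<Rightarrow> nat set \<Rightarrow> nat \<Rightarrow> nat pmf" where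
  "mix_pmf k h \<gamma> T i = embed_pmf (mix_weight k h \<gamma> T i)"

definition relabel :: "nat \<Rightarrow> nat \<Rightarrow> nat \<Rightarrow> nat" where
  "relabel z a x = (if x = z then a else x)"

lemma sum_mix_weight:
  assumes "1 \<le> h" "i < h" "2*h \<le> k"
  shows "(\<Sum>x\<in>insert k {..<2*h}. mix_weight k h \<gamma> T i x) = 1"
proof -
  have "mix_weight k h \<gamma> T i (2*j) + mix_weight k h \<gamma> T i (Suc (2*j))
      = cube_weight h \<gamma> T (2*j) + cube_weight h \<gamma> T (Suc (2*j)) - (if j = i then \<gamma> / h else 0)"
    if "j < h" for j
    unfolding cube_weight_pair_sum[OF that]
    using that assms by (auto simp: mix_weight_def cube_weight_def field_simps)
  then have "(\<Sum>x<2*h. mix_weight k h \<gamma> T i x) = 1 - \<gamma> / h"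
    using assms by (simp add: sum_lessThan_double sum_subtractf cube_weight_pair_sum)
  moreover have "mix_weight k h \<gamma> T i k = \<gamma> / h"
    by (simp add: mix_weight_def)
  ultimately show ?thesis
    using assms by simp
qed

lemma pmf_mix_pmf:
  assumes "1 \<le> h" "i < h" "2*h \<le> k" "0 \<le> \<gamma>" "\<gamma> \<le> 1"
  shows "pmf (mix_pmf k h \<gamma> T i) x = mix_weight k h \<gamma> T i x"
  unfolding mix_pmf_def
proof (rule pmf_embed_pmf_finite[of "insert k {..<2*h}"])
  show "0 \<le> mix_weight k h \<gamma> T i x" for x
    using assms cube_weight_nonneg[of \<gamma> h T x] by (simp add: mix_weight_def)
  show "mix_weight k h \<gamma> T i x = 0" if "x \<notin> insert k {..<2*h}" for x
    using that assms by (auto simp: mix_weight_def cube_weight_def)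
qed (use assms sum_mix_weight in auto)

lemma set_mix_pmf:
  assumes "1 \<le> h" "i < h" "2*h \<le> k" "0 \<le> \<gamma>" "\<gamma> \<le> 1"
  shows "set_pmf (mix_pmf k h \<gamma> T i) \<subseteq> insert k {..<2*h}"
  using assms by (auto simp: set_pmf_eq pmf_mix_pmf mix_weight_def cube_weight_def)

lemma pmf_map_relabel:
  assumes "a \<noteq> z"
  shows "pmf (map_pmf (relabel z a) W) y
           = (if y = a then pmf W a + pmf W z else if y = z then 0 else pmf W y)"
proof -
  have "relabel z a -` {y} = (if y = a then {a, z} else if y = z then {} else {y})"
    using assms by (auto simp: relabel_def split: if_splits)
  then show ?thesis
    using assms by (simp add: pmf_map measure_measure_pmf_finite measure_pmf_single)
qed

lemma cube_pmf_eq_map_mix_pmf: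
  assumes "1 \<le> h" "i < h" "2*h \<le> k" "0 \<le> \<gamma>" "\<gamma> \<le> 1" "i \<notin> T"
  shows "cube_pmf h \<gamma> (insert i T) = map_pmf (relabel k (2*i)) (mix_pmf k h \<gamma> T i)"
    and "cube_pmf h \<gamma> T = map_pmf (relabel k (Suc (2*i))) (mix_pmf k h \<gamma> T i)"
proof -
  have pair: "y = 2*i \<or> y = Suc (2*i)" if "y div 2 = i" for y
    using that by auto
  have "2*i \<noteq> k" "Suc (2*i) \<noteq> k"
    using assms by auto
  then show "cube_pmf h \<gamma> (insert i T) = map_pmf (relabel k (2*i)) (mix_pmf k h \<gamma> T i)"
    and "cube_pmf h \<gamma> T = map_pmf (relabel k (Suc (2*i))) (mix_pmf k h \<gamma> T i)"
    using assms pair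
    by (auto intro!: pmf_eqI simp: pmf_map_relabel pmf_cube_pmf pmf_mix_pmf mix_weight_def
        cube_weight_def field_simps)
qed

lemma one_minus_square_div_le_sqrt:
  fixes \<gamma> c :: real
  assumes "0 \<le> \<gamma>" "\<gamma> \<le> 1"
  shows "(1 - \<gamma>^2) / c \<le> sqrt ((1 + \<gamma>) / c * ((1 - \<gamma>) / c))"
proof (rule real_le_rsqrt)
  have "0 \<le> 1 - \<gamma>^2" "1 - \<gamma>^2 \<le> 1"
    using assms by (simp_all add: power_le_one)
  then have "(1 - \<gamma>^2)^2 \<le> 1 - \<gamma>^2"
    unfolding power2_eq_square[of "1 - \<gamma>^2"] by (rule mult_left_le[rotated])
  then show "((1 - \<gamma>^2) / c)^2 \<le> (1 + \<gamma>) / c * ((1 - \<gamma>) / c)"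
    by (simp add: power_divide power2_eq_square divide_right_mono algebra_simps)
qed

lemma bhattacharyya_cube_pmf:
  assumes "1 \<le> h" "i < h" "0 \<le> \<gamma>" "\<gamma> \<le> 1" "i \<notin> T"
  shows "1 - \<gamma>^2 / h \<le> bhattacharyya {..<2*h} (cube_pmf h \<gamma> (insert i T)) (cube_pmf h \<gamma> T)"
proof -
  let ?w = "cube_weight h \<gamma> (insert i T)" and ?v = "cube_weight h \<gamma> T"
  have pair: "1 / h - (if j = i then \<gamma>^2 / h else 0)
      \<le> sqrt (?w (2*j) * ?v (2*j)) + sqrt (?w (Suc (2*j)) * ?v (Suc (2*j)))" if j: "j < h" for j
  proof (cases "j = i")
    case True
    have "(1 - \<gamma>^2) / (2*h) \<le> sqrt ((1 + \<gamma>) / (2*h) * ((1 - \<gamma>) / (2*h)))"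
      using assms(3,4) by (rule one_minus_square_div_le_sqrt)
    moreover have "sqrt (?w (2*i) * ?v (2*i)) = sqrt ((1 + \<gamma>) / (2*h) * ((1 - \<gamma>) / (2*h)))"
      and "sqrt (?w (Suc (2*i)) * ?v (Suc (2*i))) = sqrt ((1 + \<gamma>) / (2*h) * ((1 - \<gamma>) / (2*h)))"
      unfolding cube_weight_pair[OF assms(2)] using assms(5) by (simp_all add: ac_simps)
    moreover have "1 / h - \<gamma>^2 / h = (1 - \<gamma>^2) / (2*h) + (1 - \<gamma>^2) / (2*h)"
      using assms(1) by (simp add: field_simps)
    ultimately show ?thesis
      unfolding True if_P[OF refl] by linarith
  next
    case False
    then have "?w x = ?v x" if "x div 2 = j" for x
      using that by (simp add: cube_weight_def)
    then show ?thesis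
      using False j assms(3,4) cube_weight_pair_sum[OF j, of \<gamma> T]
      by (simp add: cube_weight_nonneg)
  qed
  have "1 - \<gamma>^2 / h = (\<Sum>j<h. 1 / h - (if j = i then \<gamma>^2 / h else 0))"
    using assms(1,2) by (simp add: sum_subtractf)
  also have "\<dots> \<le> (\<Sum>j<h. sqrt (?w (2*j) * ?v (2*j)) + sqrt (?w (Suc (2*j)) * ?v (Suc (2*j))))"
    using pair by (intro sum_mono) simp
  also have "\<dots> = bhattacharyya {..<2*h} (cube_pmf h \<gamma> (insert i T)) (cube_pmf h \<gamma> T)"
    using assms by (simp add: bhattacharyya_def pmf_cube_pmf sum_lessThan_double)
  finally show ?thesis .
qed

section \<open>Assouad's argument\<close>

locale hard_instances =
  fixes k m s h :: nat and \<gamma> \<epsilon> \<delta> :: real and M :: "nat \<Rightarrow> (nat \<Rightarrow> nat) \<Rightarrow> (nat \<Rightarrow> real) measure"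
  assumes h: "1 \<le> h" "2*h \<le> k" and m: "1 \<le> m" and \<gamma>: "0 \<le> \<gamma>" "\<gamma> \<le> 1"
    and vm: "valid_count_mechanism k M" and dp: "count_mechanism_dp k m M \<epsilon> \<delta>"
    and \<epsilon>: "0 \<le> \<epsilon>" and \<delta>: "0 \<le> \<delta>"
begin

abbreviation cube_data :: "nat set \<Rightarrow> (nat \<Rightarrow> nat \<Rightarrow> nat) pmf" where
  "cube_data S \<equiv> sample_data s m (cube_pmf h \<gamma> S)"

definition test_region :: "nat \<Rightarrow> (nat \<Rightarrow> real) set" where
  "test_region i = {x \<in> space (out_space k). x (2*i) \<le> x (Suc (2*i))}"

definition test_prob :: "nat \<Rightarrow> (nat \<Rightarrow> nat) \<Rightarrow> real" where
  "test_prob i N = measure (M s N) (test_region i)"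

definition error_region :: "nat set \<Rightarrow> nat \<Rightarrow> (nat \<Rightarrow> real) set" where
  "error_region S i = (if i \<in> S then test_region i else space (out_space k) - test_region i)"

definition error_prob :: "nat set \<Rightarrow> nat \<Rightarrow> real" where
  "error_prob S i = measure_pmf.expectation (cube_data S)
     (\<lambda>D. measure (M s (counts s m D)) (error_region S i))"

lemma prob_space_M: "prob_space (M s N)"
  using vm by (rule prob_space_count_mechanism)

lemma sets_M: "sets (M s N) = sets (out_space k)" and space_M: "space (M s N) = space (out_space k)"
  and AE_M_simplex: "AE x in M s N. x \<in> prob_simplex k"
  using vm by (simp_all add: valid_count_mechanism_def)

lemma test_region_sets:
  assumes "i < h"
  shows "test_region i \<in> sets (out_space k)"
proof -
  have "2*i \<in> {..<k}" "Suc (2*i) \<in> {..<k}"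
    using assms h by auto
  then show ?thesis
    unfolding test_region_def out_space_def by measurable
qed

lemma error_region_sets: "i < h \<Longrightarrow> error_region S i \<in> sets (out_space k)"
  using test_region_sets by (auto simp: error_region_def)

lemma test_prob_bounds: "0 \<le> test_prob i N" "test_prob i N \<le> 1"
proof -
  interpret prob_space "M s N" by (rule prob_space_M)
  show "0 \<le> test_prob i N" "test_prob i N \<le> 1"
    by (simp_all add: test_prob_def)
qed

lemma measure_error_region:
  assumes "i < h"
  shows "measure (M s N) (error_region S i) = (if i \<in> S then test_prob i N else 1 - test_prob i N)"
proof -
  interpret prob_space "M s N" by (rule prob_space_M)
  show ?thesis
    using prob_compl[of "test_region i"] test_region_sets[OF assms]
    by (simp add: error_region_def test_prob_def sets_M space_M)
qed

lemma finite_set_cube_data: "finite (set_pmf (cube_data S))"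
  using set_cube_pmf[OF h(1) \<gamma>] by (intro finite_set_sample_data) (auto intro: finite_subset)

lemma error_prob_eq:
  assumes "i < h"
  shows "error_prob S i = measure_pmf.expectation (cube_data S)
           (\<lambda>D. if i \<in> S then test_prob i (counts s m D) else 1 - test_prob i (counts s m D))"
  using assms by (simp add: error_prob_def measure_error_region)

lemma l1_pair_ge_of_error_region:
  assumes "i < h" "x \<in> error_region S i"
  shows "\<gamma> / h \<le> \<bar>pmf (cube_pmf h \<gamma> S) (2*i) - x (2*i)\<bar>
                 + \<bar>pmf (cube_pmf h \<gamma> S) (Suc (2*i)) - x (Suc (2*i))\<bar>"
proof -
  have "pmf (cube_pmf h \<gamma> S) (2*i) - pmf (cube_pmf h \<gamma> S) (Suc (2*i))
      = (if i \<in> S then \<gamma> / h else - (\<gamma> / h))"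
    unfolding pmf_cube_pmf[OF h(1) \<gamma>] cube_weight_pair[OF assms(1)]
    using h(1) by (auto simp: field_simps)
  then show ?thesis
    using assms(2) by (auto simp: error_region_def test_region_def split: if_splits)
qed

lemma l1_ge_error_count:
  "\<gamma> / h * (\<Sum>i<h. indicator (error_region S i) x)
     \<le> (\<Sum>j<k. \<bar>pmf (cube_pmf h \<gamma> S) j - x j\<bar>)"
proof -
  have "\<gamma> / h * (\<Sum>i<h. indicator (error_region S i) x)
      \<le> (\<Sum>i<h. \<bar>pmf (cube_pmf h \<gamma> S) (2*i) - x (2*i)\<bar>
                + \<bar>pmf (cube_pmf h \<gamma> S) (Suc (2*i)) - x (Suc (2*i))\<bar>)"
    unfolding sum_distrib_left using l1_pair_ge_of_error_region \<gamma>(1)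
    by (intro sum_mono) (auto simp: indicator_def)
  also have "\<dots> = (\<Sum>j<2*h. \<bar>pmf (cube_pmf h \<gamma> S) j - x j\<bar>)"
    by (simp add: sum_lessThan_double)
  also have "\<dots> \<le> (\<Sum>j<k. \<bar>pmf (cube_pmf h \<gamma> S) j - x j\<bar>)"
    using h(2) by (intro sum_mono2) auto
  finally show ?thesis .
qed

lemma expected_l1_ge_error_prob:
  "\<gamma> / h * (\<Sum>i<h. measure (M s N) (error_region S i))
     \<le> (\<integral>x. (\<Sum>j<k. \<bar>pmf (cube_pmf h \<gamma> S) j - x j\<bar>) \<partial>M s N)"
proof -
  interpret prob_space "M s N" by (rule prob_space_M)
  let ?l1 = "\<lambda>x. \<Sum>j<k. \<bar>pmf (cube_pmf h \<gamma> S) j - x j\<bar>"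
  have "?l1 \<in> borel_measurable (out_space k)"
    unfolding out_space_def by measurable
  then have meas: "?l1 \<in> borel_measurable (M s N)"
    by (simp add: measurable_cong_sets[OF sets_M refl])
  have sum_p: "(\<Sum>j<k. pmf (cube_pmf h \<gamma> S) j) = 1"
    using set_cube_pmf[OF h(1) \<gamma>, of S] h(2) by (intro sum_pmf_eq_1) auto
  have "AE x in M s N. norm (?l1 x) \<le> 2"
    using AE_M_simplex
  proof eventually_elim
    case (elim x)
    then have "(\<Sum>j<k. \<bar>pmf (cube_pmf h \<gamma> S) j - x j\<bar>) \<le> (\<Sum>j<k. pmf (cube_pmf h \<gamma> S) j + x j)"
      by (intro sum_mono) (auto simp: prob_simplex_def abs_le_iff)
    also have "\<dots> = 2"
      using elim sum_p by (simp add: sum.distrib prob_simplex_def)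
    finally show ?case
      by simp
  qed
  then have int_l1: "integrable (M s N) ?l1"
    by (rule integrable_const_bound[OF _ meas])
  have ind: "integrable (M s N) (indicator (error_region S i) :: _ \<Rightarrow> real)" if "i < h" for i
    using error_region_sets[OF that] emeasure_finite
    by (intro integrable_real_indicator) (simp_all add: sets_M less_top[symmetric])
  have "\<gamma> / h * (\<Sum>i<h. measure (M s N) (error_region S i))
      = (\<integral>x. \<gamma> / h * (\<Sum>i<h. indicator (error_region S i) x) \<partial>M s N)"
    using error_region_sets ind by (simp add: Bochner_Integration.integral_sum sets_M)
  also have "\<dots> \<le> (\<integral>x. ?l1 x \<partial>M s N)"
    using ind int_l1 l1_ge_error_count by (intro integral_mono integrable_mult_right) auto
  finally show ?thesis .
qed

lemma loss_ge_error_prob: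
  "\<gamma> / h * (\<Sum>i<h. error_prob S i) \<le> loss k M s m (cube_pmf h \<gamma> S)"
proof -
  have "\<gamma> / h * (\<Sum>i<h. error_prob S i)
      = measure_pmf.expectation (cube_data S)
          (\<lambda>D. \<gamma> / h * (\<Sum>i<h. measure (M s (counts s m D)) (error_region S i)))"
    unfolding error_prob_def
    by (simp add: Bochner_Integration.integral_sum integrable_measure_pmf_finite finite_set_cube_data)
  also have "\<dots> \<le> loss k M s m (cube_pmf h \<gamma> S)"
    unfolding loss_def
    by (intro integral_mono integrable_measure_pmf_finite finite_set_cube_data expected_l1_ge_error_prob)
  finally show ?thesis .
qed

lemma error_prob_pair_ge_statistical:
  assumes i: "i < h" "i \<notin> T" and few: "real s * real m * \<gamma>^2 / h \<le> 1/2"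
  shows "1/8 \<le> error_prob T i + error_prob (insert i T) i"
proof -
  define X where "X = PiE_dflt {..<s} (\<lambda>_. 0) (\<lambda>_. PiE_dflt {..<m} 0 (\<lambda>_. {..<2*h}))"
  have X: "finite X" "set_pmf (cube_data S) \<subseteq> X" for S
    unfolding X_def using set_cube_pmf[OF h(1) \<gamma>] by (auto intro!: set_sample_data_subset)
  have "0 \<le> 1 - \<gamma>^2 / h"
    using h(1) \<gamma> by (simp add: field_simps power_le_one order_trans[of _ 1 "real h"])
  have "1/2 \<le> 1 + real (m * s) * (- (\<gamma>^2 / h))"
    using few by (simp add: field_simps)
  also have "\<dots> \<le> ((1 - \<gamma>^2 / h) ^ m) ^ s"
    using Bernoulli_inequality[of "- (\<gamma>^2 / h)" "m * s"] \<open>0 \<le> 1 - \<gamma>^2 / h\<close>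
    by (simp add: power_mult)
  also have "\<dots> \<le> (bhattacharyya {..<2*h} (cube_pmf h \<gamma> (insert i T)) (cube_pmf h \<gamma> T) ^ m) ^ s"
    using bhattacharyya_cube_pmf[OF h(1) i(1) \<gamma> i(2)] \<open>0 \<le> 1 - \<gamma>^2 / h\<close>
    by (intro power_mono zero_le_power) auto
  also have "\<dots> = bhattacharyya X (cube_data (insert i T)) (cube_data T)"
    unfolding X_def sample_data_def by (subst bhattacharyya_Pi_pmf) (auto simp: bhattacharyya_Pi_pmf)
  finally have "(1/2)^2 \<le> bhattacharyya X (cube_data (insert i T)) (cube_data T) ^ 2"
    by (intro power_mono) auto
  then have "1/8 \<le> bhattacharyya X (cube_data (insert i T)) (cube_data T) ^ 2 / 2"
    by (simp add: power_divide)
  also have "\<dots> \<le> measure_pmf.expectation (cube_data (insert i T)) (\<lambda>D. test_prob i (counts s m D))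
      + measure_pmf.expectation (cube_data T) (\<lambda>D. 1 - test_prob i (counts s m D))"
    using X test_prob_bounds by (intro test_error_ge_bhattacharyya) auto
  also have "\<dots> = error_prob (insert i T) i + error_prob T i"
    using i by (simp add: error_prob_eq)
  finally show ?thesis
    by simp
qed

lemma test_prob_relabel_le:
  assumes i: "i < h" and D: "D \<in> set_pmf (sample_data s m (mix_pmf k h \<gamma> T i))"
  shows "test_prob i (counts s m (\<lambda>u j. relabel k (Suc (2*i)) (D u j)))
           \<le> test_prob i (counts s m (\<lambda>u j. relabel k (2*i) (D u j)))
              + (counts s m D k / m + 1) * (exp \<epsilon> - 1 + \<delta>)"
proof -
  have "D u j \<in> insert k {..<2*h}" if "u < s" "j < m" for u j
    using sample_data_in_set_pmf[OF D that] set_mix_pmf[OF h(1) i h(2) \<gamma>] by auto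
  then have "valid_dataset k s m (\<lambda>u j. relabel k a (D u j))" if "a < k" for a
    using h that by (fastforce simp: valid_dataset_def relabel_def)
  then show ?thesis
    unfolding test_prob_def using m h i test_region_sets[OF i]
    by (intro count_mechanism_relabel[OF vm dp \<epsilon> \<delta>]) (auto simp: relabel_def)
qed

text \<open>Both \<open>cube_data (insert i T)\<close> and \<open>cube_data T\<close> are relabellings of one sample from
  \<open>mix_pmf\<close>; they differ only at the occurrences of the fresh label \<open>k\<close>, of which there are
  \<open>s * m * \<gamma> / h\<close> on average.\<close>
lemma error_prob_pair_ge_private:
  assumes i: "i < h" "i \<notin> T" and small: "(s * \<gamma> / h + 1) * (exp \<epsilon> - 1 + \<delta>) \<le> 7/8"
  shows "1/8 \<le> error_prob T i + error_prob (insert i T) i"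
proof -
  define W where "W = sample_data s m (mix_pmf k h \<gamma> T i)"
  define \<phi> where "\<phi> a = (\<lambda>D. test_prob i (counts s m (\<lambda>u j. relabel k a (D u j))))" for a
  have set_W: "set_pmf (mix_pmf k h \<gamma> T i) \<subseteq> insert k {..<2*h}"
    by (rule set_mix_pmf[OF h(1) i(1) h(2) \<gamma>])
  then have fin_W: "finite (set_pmf W)"
    unfolding W_def by (intro finite_set_sample_data) (auto intro: finite_subset)
  have "relabel k a 0 = 0" for a
    using h by (simp add: relabel_def)
  then have "error_prob (insert i T) i = measure_pmf.expectation W (\<phi> (2*i))"
    and "error_prob T i = measure_pmf.expectation W (\<lambda>D. 1 - \<phi> (Suc (2*i)) D)"
    unfolding error_prob_eq[OF i(1)] cube_pmf_eq_map_mix_pmf[OF h(1) i(1) h(2) \<gamma> i(2)]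
    using i(2) by (simp_all add: sample_data_map_pmf W_def \<phi>_def)
  moreover have "measure_pmf.expectation W (\<lambda>D. 1 - \<phi> (Suc (2*i)) D)
      = 1 - measure_pmf.expectation W (\<phi> (Suc (2*i)))"
    using fin_W by (simp add: integrable_measure_pmf_finite)
  moreover have "measure_pmf.expectation W (\<phi> (Suc (2*i)))
      \<le> measure_pmf.expectation W (\<phi> (2*i)) + (s * \<gamma> / h + 1) * (exp \<epsilon> - 1 + \<delta>)"
  proof -
    have "measure_pmf.expectation W (\<phi> (Suc (2*i)))
        \<le> measure_pmf.expectation W (\<lambda>D. \<phi> (2*i) D + (counts s m D k / m + 1) * (exp \<epsilon> - 1 + \<delta>))"
      using test_prob_relabel_le[OF i(1)] fin_W
      by (intro integral_mono_AE AE_pmfI integrable_measure_pmf_finite) (auto simp: W_def \<phi>_def)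
    also have "\<dots> = measure_pmf.expectation W (\<phi> (2*i))
        + (measure_pmf.expectation W (\<lambda>D. real (counts s m D k)) / m + 1) * (exp \<epsilon> - 1 + \<delta>)"
      using fin_W by (simp add: integrable_measure_pmf_finite algebra_simps)
    also have "measure_pmf.expectation W (\<lambda>D. real (counts s m D k)) = s * m * (\<gamma> / h)"
      unfolding W_def using set_W h i(1) \<gamma>
      by (simp add: expectation_counts_sample_data finite_subset pmf_mix_pmf mix_weight_def)
    finally show ?thesis
      using m by simp
  qed
  ultimately show ?thesis
    using small by linarith
qed

lemma assouad_bound:
  assumes pair: "\<And>i T. i < h \<Longrightarrow> i \<notin> T \<Longrightarrow> 1/8 \<le> error_prob T i + error_prob (insert i T) i"
    and loss: "\<And>S. loss k M s m (cube_pmf h \<gamma> S) \<le> \<alpha>"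
  shows "\<gamma> / 16 \<le> \<alpha>"
proof -
  have "real h * 2 ^ (h - 1) * (1/8) \<le> (\<Sum>S\<in>Pow {..<h}. \<Sum>i<h. error_prob S i)"
    using sum_Pow_ge_of_pairs[of "{..<h}" "1/8" "\<lambda>i S. error_prob S i"] pair by auto
  then have "\<gamma> / h * (real h * 2 ^ (h - 1) * (1/8)) \<le> \<gamma> / h * (\<Sum>S\<in>Pow {..<h}. \<Sum>i<h. error_prob S i)"
    using \<gamma> by (intro mult_left_mono) auto
  also have "\<dots> = (\<Sum>S\<in>Pow {..<h}. \<gamma> / h * (\<Sum>i<h. error_prob S i))"
    by (simp add: sum_distrib_left)
  also have "\<dots> \<le> (\<Sum>S\<in>Pow {..<h}. \<alpha>)"
    using loss_ge_error_prob loss by (intro sum_mono) (blast intro: order_trans)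
  also have "\<dots> = 2 * 2 ^ (h - 1) * \<alpha>"
    using h(1) by (simp add: card_Pow power_Suc[symmetric])
  finally show ?thesis
    using h(1) by (simp add: field_simps)
qed

lemma user_count_bounds:
  assumes loss: "\<And>p. set_pmf p \<subseteq> {..<k} \<Longrightarrow> loss k M s m p \<le> \<alpha>" and "\<alpha> < \<gamma> / 16"
  shows "1/2 < real s * real m * \<gamma>^2 / h" and "7/8 < (s * \<gamma> / h + 1) * (exp \<epsilon> - 1 + \<delta>)"
proof -
  have cube_loss: "loss k M s m (cube_pmf h \<gamma> S) \<le> \<alpha>" for S
    using set_cube_pmf[OF h(1) \<gamma>, of S] h(2) by (intro loss) auto
  show "1/2 < real s * real m * \<gamma>^2 / h"
    using assouad_bound[OF error_prob_pair_ge_statistical cube_loss] \<open>\<alpha> < \<gamma> / 16\<close> by force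
  show "7/8 < (s * \<gamma> / h + 1) * (exp \<epsilon> - 1 + \<delta>)"
    using assouad_bound[OF error_prob_pair_ge_private cube_loss] \<open>\<alpha> < \<gamma> / 16\<close> by force
qed

end

lemma user_lower_bound_arith:
  fixes k h s m :: nat and \<alpha> \<epsilon> \<delta> :: real
  assumes k: "real k \<le> 3 * h" and h: "0 < h" and \<alpha>: "0 < \<alpha>" and \<epsilon>: "0 \<le> \<epsilon>" and \<delta>: "0 \<le> \<delta>"
    and small: "\<epsilon> + \<delta> < 1/10000"
    and stat: "1/2 < real s * real m * (32 * \<alpha>)^2 / h"
    and priv: "7/8 < (s * (32 * \<alpha>) / h + 1) * (exp \<epsilon> - 1 + \<delta>)"
  shows "1/10000 * real k * ((\<epsilon> + \<delta>) + real m * \<alpha>) \<le> real s * real m * \<alpha>^2 * (\<epsilon> + \<delta>)"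
proof -
  define t where "t = \<epsilon> + \<delta>"
  have "real h < 2048 * (s * m * \<alpha>^2)"
    using stat h by (simp add: field_simps power2_eq_square)
  then have stat_k: "real k \<le> 6144 * (s * m * \<alpha>^2)"
    using k by linarith
  have "exp \<epsilon> - 1 + \<delta> \<le> 2 * t"
    using real_exp_bound_lemma[of \<epsilon>] \<epsilon> \<delta> small by (simp add: t_def)
  then have "(s * (32 * \<alpha>) / h + 1) * (exp \<epsilon> - 1 + \<delta>) \<le> (s * (32 * \<alpha>) / h + 1) * (2 * t)"
    using \<alpha> by (intro mult_left_mono) simp_all
  with priv have "7/8 < (s * (32 * \<alpha>) / h + 1) * (2 * t)"
    by linarith
  also have "\<dots> = 64 * (s * \<alpha> * t) / h + 2 * t"
    using h by (simp add: field_simps)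
  finally have "1/2 < 64 * (s * \<alpha> * t) / h"
    using small by (simp add: t_def)
  then have "real h < 128 * (s * \<alpha> * t)"
    using h by (simp add: field_simps)
  then have priv_k: "real k \<le> 384 * (s * \<alpha> * t)"
    using k by linarith
  have "real k * t + real k * (m * \<alpha>) \<le> 6144 * (s * m * \<alpha>^2) * t + 384 * (s * \<alpha> * t) * (m * \<alpha>)"
    using \<alpha> \<epsilon> \<delta> by (intro add_mono mult_right_mono stat_k priv_k) (simp_all add: t_def)
  also have "\<dots> = 6528 * (s * m * \<alpha>^2 * t)"
    by (simp add: algebra_simps power2_eq_square)
  finally have "1/10000 * k * (t + m * \<alpha>) \<le> 6528 / 10000 * (s * m * \<alpha>^2 * t)"
    by (simp add: algebra_simps)
  also have "\<dots> \<le> s * m * \<alpha>^2 * t"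
    using \<epsilon> \<delta> by (simp add: t_def)
  finally show ?thesis
    by (simp add: t_def)
qed

theorem theorem1:
  "\<exists>c>0. \<forall>(k::nat) (m::nat) (\<alpha>::real) (\<epsilon>::real) (\<delta>::real) M.
     k \<ge> 2 \<and> m \<ge> 1 \<and> 0 < \<alpha> \<and> \<alpha> < c \<and> 0 \<le> \<epsilon> \<and> 0 \<le> \<delta> \<and> \<epsilon> + \<delta> < c \<and>
     valid_count_mechanism k M \<and> count_mechanism_dp k m M \<epsilon> \<delta> \<longrightarrow>
     (\<forall>s::nat. (\<forall>p::nat pmf. set_pmf p \<subseteq> {..<k} \<longrightarrow> loss k M s m p \<le> \<alpha>) \<longrightarrow>
        c * real k * ((\<epsilon> + \<delta>) + real m * \<alpha>)
          \<le> real s * real m * \<alpha>^2 * (\<epsilon> + \<delta>))"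
proof (intro exI[of _ "1/10000 :: real"] conjI allI impI)
  fix k m s :: nat and \<alpha> \<epsilon> \<delta> :: real and M :: "nat \<Rightarrow> (nat \<Rightarrow> nat) \<Rightarrow> (nat \<Rightarrow> real) measure"
  assume H: "2 \<le> k \<and> 1 \<le> m \<and> 0 < \<alpha> \<and> \<alpha> < 1/10000 \<and> 0 \<le> \<epsilon> \<and> 0 \<le> \<delta> \<and> \<epsilon> + \<delta> < 1/10000 \<and>
    valid_count_mechanism k M \<and> count_mechanism_dp k m M \<epsilon> \<delta>"
    and loss: "\<forall>p::nat pmf. set_pmf p \<subseteq> {..<k} \<longrightarrow> loss k M s m p \<le> \<alpha>"
  interpret hard_instances k m s "k div 2" "32 * \<alpha>" \<epsilon> \<delta> M
    using H by unfold_locales auto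
  have "k \<le> 3 * (k div 2)"
    using H by linarith
  then have "real k \<le> 3 * real (k div 2)"
    by (metis of_nat_le_iff of_nat_mult of_nat_numeral)
  moreover have "\<alpha> < 32 * \<alpha> / 16"
    using H by simp
  then have "1/2 < real s * real m * (32 * \<alpha>)^2 / real (k div 2)"
    and "7/8 < (s * (32 * \<alpha>) / real (k div 2) + 1) * (exp \<epsilon> - 1 + \<delta>)"
    using loss user_count_bounds by blast+
  ultimately show "1/10000 * real k * ((\<epsilon> + \<delta>) + real m * \<alpha>) \<le> real s * real m * \<alpha>^2 * (\<epsilon> + \<delta>)"
    using H by (intro user_lower_bound_arith[where h = "k div 2"]) auto
qed simp

end
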